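(* For every fixed $\alpha>0$, the functions $(x,y)\mapsto\theta_{(x,y)}(b(x,y);\alpha)$ and $(x,y)\mapsto\widehat\theta_{(x,y)}(b(x,y);\alpha)$ (defined for $x\in\mathbb{R}$, $y>0$) have vanishing gradient at $(x,y)=(1/2,\sqrt3/2)$.
   Context: For $y>0$, $c=(c_1,c_2)\in\mathbb{R}^2$, $\alpha>0$: $\theta_{(x,y)}(c;\alpha)=\sum_{k,l\in\mathbb{Z}}\exp(-\tfrac{\pi\alpha}{y}((k+c_1)^2+2x(k+c_1)(l+c_2)+(x^2+y^2)(l+c_2)^2))$ and $\widehat\theta_{(x,y)}(c;\alpha)=\sum_{k,l\in\mathbb{Z}}\exp(-\tfrac{\pi\alpha}{y}(k^2+2xkl+(x^2+y^2)l^2))e^{2\pi i(kc_2-lc_1)}$. $b(x,y)=(b_1,b_2)$ with $b_1=\frac{x+(1-x)4y^2}{8y^2}$, $b_2=\frac{4y^2-1}{8y^2}$. *)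

theory Defs
  imports "HOL-Analysis.Analysis"
begin

definition theta :: "real \<Rightarrow> real \<Rightarrow> real \<times> real \<Rightarrow> real \<Rightarrow> real" where
  "theta x y c \<alpha> = (\<Sum>\<^sub>\<infinity>(k,l)\<in>(UNIV :: (int \<times> int) set).
     exp (- (pi * \<alpha> / y) * ((of_int k + fst c)\<^sup>2
        + 2 * x * (of_int k + fst c) * (of_int l + snd c)
        + (x\<^sup>2 + y\<^sup>2) * (of_int l + snd c)\<^sup>2)))"

definition theta_hat :: "real \<Rightarrow> real \<Rightarrow> real \<times> real \<Rightarrow> real \<Rightarrow> complex" where
  "theta_hat x y c \<alpha> = (\<Sum>\<^sub>\<infinity>(k,l)\<in>(UNIV :: (int \<times> int) set).
     complex_of_real (exp (- (pi * \<alpha> / y) * ((of_int k)\<^sup>2 + 2 * x * of_int k * of_int l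
        + (x\<^sup>2 + y\<^sup>2) * (of_int l)\<^sup>2)))
     * cis (2 * pi * (of_int k * snd c - of_int l * fst c)))"

definition bpt :: "real \<Rightarrow> real \<Rightarrow> real \<times> real" where
  "bpt x y = ((x + (1 - x) * 4 * y\<^sup>2) / (8 * y\<^sup>2), (4 * y\<^sup>2 - 1) / (8 * y\<^sup>2))"

end

theory Submission
  imports Defs
begin

text \<open>Write \<open>\<tau> = x + i y\<close>. As functions of \<open>(\<tau>, c)\<close>, both theta functions are invariant under
  \<open>(\<tau>, c) \<mapsto> (1 / (1 - \<tau>), (c\<^sub>2, 1 - c\<^sub>1 - c\<^sub>2))\<close>, which merely permutes the terms of the
  lattice sums. This map fixes \<open>(\<rho>, (1/3, 1/3))\<close> with \<open>\<rho> = exp (i \<pi> / 3)\<close>, and its derivative \<open>L\<close>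
  there satisfies \<open>1 + L + L\<^sup>2 = 0\<close>. The derivative \<open>D\<close> of an invariant function at the fixed
  point satisfies \<open>D = D \<circ> L\<close>, hence \<open>3 D = D \<circ> (1 + L + L\<^sup>2) = 0\<close>. Differentiability at the
  fixed point comes from termwise differentiation: near it, the terms and their derivatives are
  dominated by a summable Gaussian majorant. Since \<open>b(1/2, \<surd>3/2) = (1/3, 1/3)\<close>, the chain rule
  finishes the proof.\<close>

section \<open>Termwise differentiation and invariant functions\<close>

lemma dominated_series_uniform_tail:
  fixes f' :: "nat \<Rightarrow> 'a \<Rightarrow> 'c::real_normed_vector \<Rightarrow> 'b::banach"
  assumes B: "summable B" and bound: "\<And>n y h. y \<in> S \<Longrightarrow> norm (f' n y h) \<le> B n * norm h"
    and "r > 0"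
  shows "\<forall>\<^sub>F n in sequentially. \<forall>y\<in>S. \<forall>h. norm ((\<Sum>i<n. f' i y h) - (\<Sum>i. f' i y h)) \<le> r * norm h"
proof -
  obtain N where N: "\<And>n. n \<ge> N \<Longrightarrow> norm (\<Sum>i. B (i + n)) < r"
    using suminf_exist_split[OF \<open>r > 0\<close> B] by blast
  show ?thesis
  proof (rule eventually_sequentiallyI[of N], intro ballI allI)
    fix n y h assume "N \<le> n" "y \<in> S"
    have summable_f': "summable (\<lambda>i. f' i y h)"
      by (rule summable_norm_cancel, rule summable_comparison_test'[OF summable_mult2[OF B, of "norm h"]])
         (simp add: bound[OF \<open>y \<in> S\<close>])
    have "norm ((\<Sum>i<n. f' i y h) - (\<Sum>i. f' i y h)) = norm (\<Sum>i. f' (i + n) y h)"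
      using suminf_minus_initial_segment[OF summable_f', of n] by (simp add: norm_minus_commute)
    also have "\<dots> \<le> (\<Sum>i. B (i + n) * norm h)"
      using bound[OF \<open>y \<in> S\<close>] summable_mult2[OF B[THEN summable_ignore_initial_segment[of _ n]]]
      by (intro norm_suminf_le) auto
    also have "\<dots> = (\<Sum>i. B (i + n)) * norm h"
      using B[THEN summable_ignore_initial_segment[of _ n]] by (rule suminf_mult2[symmetric])
    also have "\<dots> \<le> r * norm h"
      using N[OF \<open>N \<le> n\<close>] by (intro mult_right_mono) auto
    finally show "norm ((\<Sum>i<n. f' i y h) - (\<Sum>i. f' i y h)) \<le> r * norm h" .
  qed
qed

lemma has_derivative_suminf_dominated:
  fixes f :: "nat \<Rightarrow> 'a::real_normed_vector \<Rightarrow> 'b::banach"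
  assumes S: "open S" "convex S" "x \<in> S" and B: "summable B"
    and deriv: "\<And>n y. y \<in> S \<Longrightarrow> (f n has_derivative f' n y) (at y)"
    and deriv_bound: "\<And>n y h. y \<in> S \<Longrightarrow> norm (f' n y h) \<le> B n * norm h"
    and bound: "\<And>n y. y \<in> S \<Longrightarrow> norm (f n y) \<le> B n"
  shows "((\<lambda>y. \<Sum>n. f n y) has_derivative (\<lambda>h. \<Sum>n. f' n x h)) (at x)"
proof -
  have "summable (\<lambda>n. f n x)"
    by (rule summable_norm_cancel, rule summable_comparison_test'[OF B]) (simp add: bound[OF S(3)])
  then obtain g where g: "\<And>y. y \<in> S \<Longrightarrow> (\<lambda>n. f n y) sums g y"
      "\<And>y. y \<in> S \<Longrightarrow> (g has_derivative (\<lambda>h. \<Sum>n. f' n y h)) (at y within S)"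
    using has_derivative_series[OF S(2) deriv[THEN has_derivative_at_withinI]
        dominated_series_uniform_tail[OF B deriv_bound] S(3) summable_sums]
    by blast
  have "(g has_derivative (\<lambda>h. \<Sum>n. f' n x h)) (at x)"
    using g(2)[OF S(3)] at_within_open[OF S(3,1)] by simp
  then show ?thesis
    by (rule has_derivative_transform_within_open[OF _ S(1,3)]) (use g(1) sums_unique in auto)
qed

lemma has_derivative_infsum_dominated:
  fixes f :: "'i::countable \<Rightarrow> 'a::real_normed_vector \<Rightarrow> 'b::banach"
  assumes S: "open S" "convex S" "x \<in> S" and B: "B summable_on UNIV"
    and deriv: "\<And>i y. y \<in> S \<Longrightarrow> (f i has_derivative f' i y) (at y)"
    and deriv_bound: "\<And>i y h. y \<in> S \<Longrightarrow> norm (f' i y h) \<le> B i * norm h"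
    and bound: "\<And>i y. y \<in> S \<Longrightarrow> norm (f i y) \<le> B i"
  shows "((\<lambda>y. \<Sum>\<^sub>\<infinity>i. f i y) has_derivative (\<lambda>h. \<Sum>\<^sub>\<infinity>i. f' i x h)) (at x)"
proof (cases "finite (UNIV :: 'i set)")
  case True
  then show ?thesis
    by (simp only: infsum_finite) (rule has_derivative_sum, rule deriv[OF S(3)])
next
  case False
  then obtain e :: "nat \<Rightarrow> 'i" where e: "bij e"
    by (rule countable_infiniteE'[OF countableI_type])
  have B_nonneg: "B i \<ge> 0" for i
    by (rule order_trans[OF norm_ge_zero bound[OF S(3)]])
  have "(\<lambda>n. B (e n)) summable_on UNIV"
    by (subst summable_on_reindex_bij_betw[OF e]) (rule B)
  then have summable_Be: "summable (\<lambda>n. B (e n))"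
    by (rule summable_on_UNIV_nonneg_real_iff[THEN iffD1, rotated]) (rule B_nonneg)
  have suminf_eq_infsum: "(\<Sum>n. g (e n)) = (\<Sum>\<^sub>\<infinity>i. g i)"
    if "\<And>i. norm (g i) \<le> B i * c" for g :: "'i \<Rightarrow> 'b" and c
  proof -
    have "summable (\<lambda>n. norm (g (e n)))"
      by (rule summable_comparison_test'[OF summable_mult2[OF summable_Be, of c]]) (simp add: that)
    then have "((\<lambda>n. g (e n)) has_sum (\<Sum>n. g (e n))) UNIV"
      by (rule norm_summable_imp_has_sum[OF _ summable_sums[OF summable_norm_cancel]]) fact
    then show ?thesis
      using has_sum_reindex_bij_betw[OF e, of g] by (simp add: infsumI)
  qed
  have "(\<lambda>h. \<Sum>n. f' (e n) x h) = (\<lambda>h. \<Sum>\<^sub>\<infinity>i. f' i x h)"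
    by (rule ext, rule suminf_eq_infsum, rule deriv_bound[OF S(3)])
  moreover have "((\<lambda>y. \<Sum>n. f (e n) y) has_derivative (\<lambda>h. \<Sum>n. f' (e n) x h)) (at x)"
    using S summable_Be deriv deriv_bound bound by (rule has_derivative_suminf_dominated)
  ultimately have "((\<lambda>y. \<Sum>n. f (e n) y) has_derivative (\<lambda>h. \<Sum>\<^sub>\<infinity>i. f' i x h)) (at x)"
    by simp
  then show ?thesis
    by (rule has_derivative_transform_within_open[OF _ S(1,3)])
      (rule suminf_eq_infsum[where c = 1], simp add: bound)
qed

lemma differentiable_infsum_dominated:
  fixes f :: "'i::countable \<Rightarrow> 'a::real_normed_vector \<Rightarrow> 'b::banach"
  assumes S: "open S" "convex S" "x \<in> S" and B: "B summable_on UNIV"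
    and deriv: "\<And>i y. y \<in> S \<Longrightarrow> \<exists>f'. (f i has_derivative f') (at y) \<and> (\<forall>h. norm (f' h) \<le> B i * norm h)"
    and bound: "\<And>i y. y \<in> S \<Longrightarrow> norm (f i y) \<le> B i"
  shows "(\<lambda>y. \<Sum>\<^sub>\<infinity>i. f i y) differentiable (at x)"
proof -
  have "\<forall>i y. \<exists>f'. y \<in> S \<longrightarrow> (f i has_derivative f') (at y) \<and> (\<forall>h. norm (f' h) \<le> B i * norm h)"
    using deriv by blast
  then obtain f' where f': "\<forall>i y. y \<in> S \<longrightarrow>
      (f i has_derivative f' i y) (at y) \<and> (\<forall>h. norm (f' i y h) \<le> B i * norm h)"
    by metis
  have "((\<lambda>y. \<Sum>\<^sub>\<infinity>i. f i y) has_derivative (\<lambda>h. \<Sum>\<^sub>\<infinity>i. f' i x h)) (at x)"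
    using S B f' bound by (intro has_derivative_infsum_dominated) auto
  then show ?thesis
    unfolding differentiable_def by blast
qed

lemma has_derivative_zero_of_invariant:
  fixes F :: "'a::real_normed_vector \<Rightarrow> 'b::real_normed_vector"
  assumes F: "(F has_derivative D) (at a)"
    and g: "(g has_derivative L) (at a)" "g a = a"
    and invariant: "\<forall>\<^sub>F x in at a. F (g x) = F x"
    and order3: "\<And>h. h + L h + L (L h) = 0"
  shows "D = (\<lambda>_. 0)"
proof
  fix h
  have "((\<lambda>x. F (g x)) has_derivative (\<lambda>h. D (L h))) (at a)"
    using has_derivative_compose[OF g(1), of F D] F g(2) by simp
  then have "(F has_derivative (\<lambda>h. D (L h))) (at a)"
    by (rule has_derivative_transform_eventually) (use invariant g(2) in simp_all)
  then have DL: "(\<lambda>h. D (L h)) = D"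
    using F by (rule has_derivative_unique)
  have "linear D"
    using F by (rule has_derivative_linear)
  then have "D h + D (L h) + D (L (L h)) = 0"
    using order3[of h] by (metis linear_add linear_0)
  then have "(1 + 1 + 1 :: real) *\<^sub>R D h = 0"
    unfolding DL[THEN fun_cong] by (simp only: scaleR_add_left scaleR_one)
  then show "D h = 0"
    by simp
qed

lemma exp_times_cis_derivative_bound:
  fixes g \<phi> :: "'a::real_normed_vector \<Rightarrow> real"
  assumes "(g has_derivative g') (at x)" "(\<phi> has_derivative \<phi>') (at x)"
    and "\<And>h. \<bar>g' h\<bar> \<le> A * norm h" "\<And>h. \<bar>\<phi>' h\<bar> \<le> P * norm h"
  shows "\<exists>f'. ((\<lambda>y. complex_of_real (exp (g y)) * cis (\<phi> y)) has_derivative f') (at x) \<and>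
    (\<forall>h. norm (f' h) \<le> (A + P) * exp (g x) * norm h)"
proof (intro exI conjI allI)
  show "((\<lambda>y. complex_of_real (exp (g y)) * cis (\<phi> y)) has_derivative
      (\<lambda>h. complex_of_real (exp (g x)) * (\<phi>' h *\<^sub>R (\<i> * cis (\<phi> x)))
        + complex_of_real (g' h * exp (g x)) * cis (\<phi> x))) (at x)"
    using has_derivative_mult[OF has_derivative_of_real[OF has_derivative_exp[OF assms(1)]]
        has_derivative_cis[OF assms(2)]] .
  fix h
  have "norm (complex_of_real (exp (g x)) * (\<phi>' h *\<^sub>R (\<i> * cis (\<phi> x)))
      + complex_of_real (g' h * exp (g x)) * cis (\<phi> x)) \<le> exp (g x) * \<bar>\<phi>' h\<bar> + \<bar>g' h\<bar> * exp (g x)"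
    by (rule order_trans[OF norm_triangle_ineq]) (simp add: norm_mult abs_mult)
  also have "\<dots> \<le> exp (g x) * (P * norm h) + (A * norm h) * exp (g x)"
    using assms(3,4) by (intro add_mono mult_left_mono mult_right_mono) auto
  also have "\<dots> = (A + P) * exp (g x) * norm h"
    by (simp add: algebra_simps)
  finally show "norm (complex_of_real (exp (g x)) * (\<phi>' h *\<^sub>R (\<i> * cis (\<phi> x)))
      + complex_of_real (g' h * exp (g x)) * cis (\<phi> x)) \<le> (A + P) * exp (g x) * norm h" .
qed

section \<open>A Gaussian majorant on the lattice\<close>

lemma poly_times_gaussian_le_exp:
  fixes a t :: real
  assumes "a > 0" "t \<ge> 0"
  shows "(1 + t)\<^sup>2 * exp (-a * t\<^sup>2) \<le> 2 * (9/4 + 1/a) * exp (a/4) * exp (-a * t)"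
proof -
  define z where "z = (t - 1/2)\<^sup>2"
  define K where "K = 9/4 + 1/a"
  have completed_square: "exp (-a * t\<^sup>2) = exp (-a * z) * exp (a/4) * exp (-a * t)"
    unfolding z_def exp_add[symmetric] by (simp add: power2_eq_square algebra_simps)
  have "(1 + t)\<^sup>2 \<le> 9/2 + 2 * z"
    using zero_le_power2[of "t - 2"] unfolding z_def by (simp add: power2_eq_square algebra_simps)
  moreover have "9/4 + z \<le> K * (1 + a * z)"
    using assms(1) zero_le_power2[of "t - 1/2"] by (simp add: K_def z_def field_simps)
  ultimately have "(1 + t)\<^sup>2 \<le> 2 * (K * (1 + a * z))"
    by linarith
  then have "(1 + t)\<^sup>2 * exp (-a * z) \<le> 2 * K * ((1 + a * z) * exp (-a * z))"
    using mult_right_mono[of "(1 + t)\<^sup>2" "2 * (K * (1 + a * z))" "exp (-a * z)"] by (simp add: mult.assoc)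
  also have "\<dots> \<le> 2 * K"
    using exp_ge_add_one_self[of "a * z"] assms(1)
    by (intro mult_left_le) (auto simp: K_def exp_minus field_simps)
  finally have "(1 + t)\<^sup>2 * exp (-a * z) \<le> 2 * K" .
  then show ?thesis
    unfolding completed_square K_def by (simp add: mult_right_mono mult.assoc[symmetric])
qed

lemma summable_exp_abs_int:
  fixes a :: real
  assumes "a > 0"
  shows "(\<lambda>k::int. exp (-a * \<bar>of_int k\<bar>)) summable_on UNIV"
proof -
  have "exp (-a * real n) = exp (-a) ^ n" for n :: nat
    by (simp add: exp_of_nat_mult[symmetric] mult.commute)
  then have nat: "(\<lambda>n::nat. exp (-a * real n)) summable_on UNIV"
    using summable_geometric[of "exp (-a)"] assms
    by (subst summable_on_UNIV_nonneg_real_iff) auto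
  have "(\<lambda>k::int. exp (-a * \<bar>of_int k\<bar>)) summable_on (range int)"
    by (subst summable_on_reindex) (use nat in \<open>auto simp: o_def\<close>)
  moreover have "(\<lambda>k::int. exp (-a * \<bar>of_int k\<bar>)) summable_on (range (\<lambda>n. - int n))"
    by (subst summable_on_reindex) (use nat in \<open>auto simp: o_def inj_on_def\<close>)
  moreover have "(UNIV :: int set) = range int \<union> range (\<lambda>n. - int n)"
    by (auto intro: int_cases2)
  ultimately show ?thesis
    by (metis summable_on_union)
qed

lemma summable_on_product_nonneg:
  fixes f :: "'a \<Rightarrow> real" and g :: "'b \<Rightarrow> real"
  assumes "f summable_on UNIV" "g summable_on UNIV" "\<And>x. f x \<ge> 0" "\<And>y. g y \<ge> 0"
  shows "(\<lambda>p. f (fst p) * g (snd p)) summable_on UNIV"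
proof -
  have "(\<lambda>p. f (fst p) * g (snd p)) summable_on UNIV \<times> UNIV"
    by (rule summable_on_SigmaI[where g = "\<lambda>x. f x * infsum g UNIV"])
       (use has_sum_cmult_right[OF has_sum_infsum[OF assms(2)]] summable_on_cmult_left[OF assms(1)]
          assms(3,4) in auto)
  then show ?thesis
    by simp
qed

definition gauss_weight :: "real \<Rightarrow> 'a::real_normed_vector \<Rightarrow> real" where
  "gauss_weight a v = (1 + norm v)\<^sup>2 * exp (-a * (norm v)\<^sup>2)"

lemma gauss_weight_nonneg: "0 \<le> gauss_weight a v"
  by (simp add: gauss_weight_def)

definition lattice_point :: "int \<times> int \<Rightarrow> real \<times> real" where
  "lattice_point n = (of_int (fst n), of_int (snd n))"

lemma abs_fst_add_abs_snd_le: "\<bar>fst v\<bar> + \<bar>snd v\<bar> \<le> 2 * norm (v :: real \<times> real)"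
  using norm_fst_le[of "fst v" "snd v"] norm_snd_le[of "snd v" "fst v"] by simp

lemma lattice_gaussian_majorant:
  fixes a :: real
  assumes "a > 0"
  obtains B :: "int \<times> int \<Rightarrow> real" where "B summable_on UNIV"
    and "\<And>n c. norm c \<le> 1 \<Longrightarrow> gauss_weight a (lattice_point n + c) \<le> B n"
proof
  define K where "K = 2 * (9/4 + 1/a) * exp (a/4) * exp a"
  define e where "e k = exp (- (a/2) * \<bar>of_int k\<bar>)" for k :: int
  show "(\<lambda>n. K * (e (fst n) * e (snd n))) summable_on UNIV"
    using summable_on_product_nonneg[OF summable_exp_abs_int summable_exp_abs_int, of "a/2" "a/2"]
      assms
    by (intro summable_on_cmult_right) (simp add: e_def)
  fix n :: "int \<times> int" and c :: "real \<times> real"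
  assume "norm c \<le> 1"
  define p where "p = lattice_point n"
  define t where "t = norm (p + c)"
  have "norm p \<le> t + 1"
    using norm_triangle_ineq4[of "p + c" c] \<open>norm c \<le> 1\<close> by (simp add: t_def)
  moreover have "\<bar>of_int (fst n)\<bar> + \<bar>of_int (snd n)\<bar> \<le> 2 * norm p"
    using abs_fst_add_abs_snd_le[of p] by (simp add: p_def lattice_point_def)
  ultimately have "\<bar>of_int (fst n)\<bar> + \<bar>of_int (snd n)\<bar> \<le> 2 * t + 2"
    by linarith
  then have "a/2 * (\<bar>of_int (fst n)\<bar> + \<bar>of_int (snd n)\<bar>) \<le> a/2 * (2 * t + 2)"
    using assms by (intro mult_left_mono) auto
  then have "- a * t \<le> a + (- (a/2) * \<bar>of_int (fst n)\<bar> + - (a/2) * \<bar>of_int (snd n)\<bar>)"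
    by (simp add: algebra_simps)
  then have "exp (-a * t) \<le> exp a * (e (fst n) * e (snd n))"
    by (simp add: e_def exp_add[symmetric])
  then have "2 * (9/4 + 1/a) * exp (a/4) * exp (-a * t) \<le> K * (e (fst n) * e (snd n))"
    using assms by (simp add: K_def mult.assoc mult_left_mono)
  with poly_times_gaussian_le_exp[OF assms, of t]
  show "gauss_weight a (lattice_point n + c) \<le> K * (e (fst n) * e (snd n))"
    by (simp add: gauss_weight_def t_def p_def)
qed

text \<open>With \<open>\<tau> = x + i y\<close>, the quadratic form \<open>u\<^sup>2 + 2 x u w + (x\<^sup>2 + y\<^sup>2) w\<^sup>2\<close> in the definition of
  \<open>theta\<close> is \<open>\<bar>u + \<tau> w\<bar>\<^sup>2\<close>.\<close>

definition lattice_vec :: "complex \<Rightarrow> real \<times> real \<Rightarrow> complex" where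
  "lattice_vec \<tau> v = of_real (fst v) + \<tau> * of_real (snd v)"

definition theta_exponent :: "real \<Rightarrow> complex \<Rightarrow> real \<times> real \<Rightarrow> real" where
  "theta_exponent \<alpha> \<tau> v = - pi * \<alpha> * (cmod (lattice_vec \<tau> v))\<^sup>2 / Im \<tau>"

lemma norm_le_cmod_lattice_vec:
  assumes "1/2 \<le> Im \<tau>" "cmod \<tau> \<le> 2"
  shows "norm v \<le> 7 * cmod (lattice_vec \<tau> v)"
proof -
  define w where "w = lattice_vec \<tau> v"
  have "Im w = Im \<tau> * snd v"
    by (simp add: w_def lattice_vec_def)
  then have "\<bar>snd v\<bar> * Im \<tau> \<le> cmod w"
    using assms(1) abs_Im_le_cmod[of w] by (simp add: abs_mult mult.commute)
  moreover have "\<bar>snd v\<bar> * (1/2) \<le> \<bar>snd v\<bar> * Im \<tau>"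
    using assms(1) by (intro mult_left_mono) auto
  ultimately have snd_le: "\<bar>snd v\<bar> \<le> 2 * cmod w"
    by linarith
  have "of_real (fst v) = w - \<tau> * of_real (snd v)"
    by (simp add: w_def lattice_vec_def)
  then have "\<bar>fst v\<bar> \<le> cmod w + cmod \<tau> * \<bar>snd v\<bar>"
    by (metis norm_mult norm_of_real norm_triangle_ineq4)
  also have "\<dots> \<le> cmod w + 2 * (2 * cmod w)"
    using assms(2) snd_le by (intro add_left_mono mult_mono) auto
  finally have "\<bar>fst v\<bar> \<le> 5 * cmod w"
    by simp
  then show ?thesis
    using norm_Pair_le[of "fst v" "snd v"] snd_le by (simp add: w_def)
qed

lemma norm_lattice_vec_le:
  assumes "cmod \<tau> \<le> 2"
  shows "cmod (lattice_vec \<tau> u) \<le> 3 * norm u"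
proof -
  have "cmod (lattice_vec \<tau> u) \<le> \<bar>fst u\<bar> + cmod \<tau> * \<bar>snd u\<bar>"
    unfolding lattice_vec_def by (metis norm_mult norm_of_real norm_triangle_ineq)
  also have "\<dots> \<le> norm u + 2 * norm u"
    using assms norm_fst_le[of "fst u" "snd u"] norm_snd_le[of "snd u" "fst u"]
    by (intro add_mono mult_mono) auto
  finally show ?thesis
    by simp
qed

lemma theta_exponent_le:
  assumes "0 < \<alpha>" "1/2 \<le> Im \<tau>" "cmod \<tau> \<le> 2"
  shows "theta_exponent \<alpha> \<tau> v \<le> - (pi * \<alpha> / 98) * (norm v)\<^sup>2"
proof -
  define N where "N = (cmod (lattice_vec \<tau> v))\<^sup>2"
  have "(norm v)\<^sup>2 \<le> (7 * cmod (lattice_vec \<tau> v))\<^sup>2"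
    using norm_le_cmod_lattice_vec[OF assms(2,3)] by (rule power_mono) simp
  then have "(norm v)\<^sup>2 \<le> 49 * N"
    by (simp add: N_def power_mult_distrib)
  moreover have "N / 2 \<le> N / Im \<tau>"
    using assms(2,3) abs_Im_le_cmod[of \<tau>] by (intro divide_left_mono) (auto simp: N_def)
  ultimately have "(norm v)\<^sup>2 / 98 \<le> N / Im \<tau>"
    by linarith
  then have "pi * \<alpha> * ((norm v)\<^sup>2 / 98) \<le> pi * \<alpha> * (N / Im \<tau>)"
    using assms(1) by (intro mult_left_mono) auto
  then show ?thesis
    by (simp add: theta_exponent_def N_def)
qed

lemma exp_theta_exponent_le_gauss_weight:
  assumes "0 < \<alpha>" "1/2 \<le> Im \<tau>" "cmod \<tau> \<le> 2"
  shows "(1 + norm v)\<^sup>2 * exp (theta_exponent \<alpha> \<tau> v) \<le> gauss_weight (pi * \<alpha> / 98) v"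
    and "exp (theta_exponent \<alpha> \<tau> v) \<le> gauss_weight (pi * \<alpha> / 98) v"
proof -
  show *: "(1 + norm v)\<^sup>2 * exp (theta_exponent \<alpha> \<tau> v) \<le> gauss_weight (pi * \<alpha> / 98) v"
    unfolding gauss_weight_def using theta_exponent_le[OF assms, of v]
    by (intro mult_left_mono) simp_all
  have "exp (theta_exponent \<alpha> \<tau> v) \<le> (1 + norm v)\<^sup>2 * exp (theta_exponent \<alpha> \<tau> v)"
    by (simp add: mult_le_cancel_right1)
  with * show "exp (theta_exponent \<alpha> \<tau> v) \<le> gauss_weight (pi * \<alpha> / 98) v"
    by linarith
qed

lemma theta_exponent_has_derivative:
  assumes "Im \<tau> \<noteq> 0"
  shows "((\<lambda>z. theta_exponent \<alpha> (fst z) (snd z)) has_derivative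
      (\<lambda>h. pi * \<alpha> * ((cmod (lattice_vec \<tau> v))\<^sup>2 * Im (fst h) / (Im \<tau>)\<^sup>2
        - 2 * (lattice_vec \<tau> v \<bullet> (lattice_vec \<tau> (snd h) + fst h * of_real (snd v))) / Im \<tau>)))
    (at (\<tau>, v))"
  unfolding theta_exponent_def lattice_vec_def power2_norm_eq_inner
  apply (rule has_derivative_eq_rhs)
   apply (rule derivative_eq_intros refl | simp add: assms)+
  apply (rule ext)
  apply (simp add: field_simps power2_eq_square)
  apply (simp add: inner_commute)
  done

lemma norm_lattice_vec_derivative_le:
  assumes "cmod \<tau> \<le> 2"
  shows "cmod (lattice_vec \<tau> (snd h) + fst h * of_real (snd v)) \<le> 3 * (1 + norm v) * norm h"
proof -
  have "cmod (lattice_vec \<tau> (snd h) + fst h * of_real (snd v))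
      \<le> cmod (lattice_vec \<tau> (snd h)) + cmod (fst h) * \<bar>snd v\<bar>"
    by (metis norm_mult norm_of_real norm_triangle_ineq)
  also have "\<dots> \<le> 3 * norm (snd h) + norm h * norm v"
    using norm_lattice_vec_le[OF assms, of "snd h"] norm_fst_le[of "fst h" "snd h"]
      norm_snd_le[of "snd v" "fst v"]
    by (intro add_mono mult_mono) auto
  also have "\<dots> \<le> 3 * norm h + 3 * (norm v * norm h)"
    using norm_snd_le[of "snd h" "fst h"] by (intro add_mono) auto
  also have "\<dots> = 3 * (1 + norm v) * norm h"
    by (simp add: algebra_simps)
  finally show ?thesis .
qed

lemma lattice_vec_quadratic_bounds:
  assumes "cmod \<tau> \<le> 2"
  shows "(cmod (lattice_vec \<tau> v))\<^sup>2 \<le> 9 * (1 + norm v)\<^sup>2"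
    and "\<bar>lattice_vec \<tau> v \<bullet> (lattice_vec \<tau> (snd h) + fst h * of_real (snd v))\<bar>
      \<le> 9 * (1 + norm v)\<^sup>2 * norm h"
proof -
  have w: "cmod (lattice_vec \<tau> v) \<le> 3 * (1 + norm v)"
    using norm_lattice_vec_le[OF assms, of v] by simp
  have "(cmod (lattice_vec \<tau> v))\<^sup>2 \<le> (3 * (1 + norm v))\<^sup>2"
    by (rule power_mono[OF w]) simp
  also have "\<dots> = 9 * (1 + norm v)\<^sup>2"
    by (simp only: power_mult_distrib) simp
  finally show "(cmod (lattice_vec \<tau> v))\<^sup>2 \<le> 9 * (1 + norm v)\<^sup>2" .
  have "\<bar>lattice_vec \<tau> v \<bullet> (lattice_vec \<tau> (snd h) + fst h * of_real (snd v))\<bar>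
      \<le> cmod (lattice_vec \<tau> v) * cmod (lattice_vec \<tau> (snd h) + fst h * of_real (snd v))"
    by (rule Cauchy_Schwarz_ineq2)
  also have "\<dots> \<le> (3 * (1 + norm v)) * (3 * (1 + norm v) * norm h)"
    using w norm_lattice_vec_derivative_le[OF assms] by (intro mult_mono) simp_all
  finally show "\<bar>lattice_vec \<tau> v \<bullet> (lattice_vec \<tau> (snd h) + fst h * of_real (snd v))\<bar>
      \<le> 9 * (1 + norm v)\<^sup>2 * norm h"
    by (simp add: power2_eq_square algebra_simps)
qed

lemma theta_exponent_derivative_bound:
  assumes "0 < \<alpha>" "1/2 \<le> Im \<tau>" "cmod \<tau> \<le> 2"
  obtains E' where "((\<lambda>z. theta_exponent \<alpha> (fst z) (snd z)) has_derivative E') (at (\<tau>, v))"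
    and "\<And>h. \<bar>E' h\<bar> \<le> 72 * pi * \<alpha> * (1 + norm v)\<^sup>2 * norm h"
proof
  define w where "w = lattice_vec \<tau> v"
  define dw where "dw h = lattice_vec \<tau> (snd h) + fst h * of_real (snd v)" for h :: "complex \<times> real \<times> real"
  show "((\<lambda>z. theta_exponent \<alpha> (fst z) (snd z)) has_derivative
      (\<lambda>h. pi * \<alpha> * ((cmod w)\<^sup>2 * Im (fst h) / (Im \<tau>)\<^sup>2 - 2 * (w \<bullet> dw h) / Im \<tau>))) (at (\<tau>, v))"
    unfolding w_def dw_def using assms(2) by (intro theta_exponent_has_derivative) auto
  fix h :: "complex \<times> real \<times> real"
  note ww = lattice_vec_quadratic_bounds(1)[OF assms(3), of v, folded w_def]
  note wdw = lattice_vec_quadratic_bounds(2)[OF assms(3), of v h, folded w_def dw_def]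
  have Im_h: "\<bar>Im (fst h)\<bar> \<le> norm h"
    using abs_Im_le_cmod[of "fst h"] norm_fst_le[of "fst h" "snd h"] by simp
  have inv_Im: "1 / Im \<tau> \<le> 2"
    using assms(2) by (simp add: divide_le_eq)
  then have inv_Im2: "1 / (Im \<tau>)\<^sup>2 \<le> 4"
    using power_mono[OF inv_Im, of 2] assms(2) by (simp add: power_one_over)
  have "\<bar>(cmod w)\<^sup>2 * Im (fst h) / (Im \<tau>)\<^sup>2\<bar> = (cmod w)\<^sup>2 * \<bar>Im (fst h)\<bar> * (1 / (Im \<tau>)\<^sup>2)"
    by (simp add: abs_mult)
  also have "\<dots> \<le> 9 * (1 + norm v)\<^sup>2 * norm h * 4"
    using ww Im_h inv_Im2 by (intro mult_mono) auto
  finally have term1: "\<bar>(cmod w)\<^sup>2 * Im (fst h) / (Im \<tau>)\<^sup>2\<bar> \<le> 36 * (1 + norm v)\<^sup>2 * norm h"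
    by simp
  have "\<bar>2 * (w \<bullet> dw h) / Im \<tau>\<bar> = 2 * \<bar>w \<bullet> dw h\<bar> * (1 / Im \<tau>)"
    using assms(2) by (simp add: abs_mult)
  also have "\<dots> \<le> 2 * (9 * (1 + norm v)\<^sup>2 * norm h) * 2"
    using wdw inv_Im assms(2) by (intro mult_mono) auto
  finally have term2: "\<bar>2 * (w \<bullet> dw h) / Im \<tau>\<bar> \<le> 36 * (1 + norm v)\<^sup>2 * norm h"
    by simp
  have "\<bar>(cmod w)\<^sup>2 * Im (fst h) / (Im \<tau>)\<^sup>2 - 2 * (w \<bullet> dw h) / Im \<tau>\<bar> \<le> 72 * (1 + norm v)\<^sup>2 * norm h"
    using term1 term2 abs_triangle_ineq4[of "(cmod w)\<^sup>2 * Im (fst h) / (Im \<tau>)\<^sup>2" "2 * (w \<bullet> dw h) / Im \<tau>"]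
    by linarith
  then have "pi * \<alpha> * \<bar>(cmod w)\<^sup>2 * Im (fst h) / (Im \<tau>)\<^sup>2 - 2 * (w \<bullet> dw h) / Im \<tau>\<bar>
      \<le> pi * \<alpha> * (72 * (1 + norm v)\<^sup>2 * norm h)"
    using assms(1) by (intro mult_left_mono) auto
  then show "\<bar>pi * \<alpha> * ((cmod w)\<^sup>2 * Im (fst h) / (Im \<tau>)\<^sup>2 - 2 * (w \<bullet> dw h) / Im \<tau>)\<bar>
      \<le> 72 * pi * \<alpha> * (1 + norm v)\<^sup>2 * norm h"
    using assms(1) by (simp add: abs_mult mult_ac)
qed

lemma theta_exponent_fixed_vector_derivative_bound:
  fixes c :: "'a::real_normed_vector"
  assumes "0 < \<alpha>" "1/2 \<le> Im \<tau>" "cmod \<tau> \<le> 2"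
  obtains E' where "((\<lambda>z. theta_exponent \<alpha> (fst z) v) has_derivative E') (at (\<tau>, c))"
    and "\<And>h. \<bar>E' h\<bar> \<le> 72 * pi * \<alpha> * (1 + norm v)\<^sup>2 * norm h"
proof -
  obtain E' where E': "((\<lambda>z. theta_exponent \<alpha> (fst z) (snd z)) has_derivative E') (at (\<tau>, v))"
    and E'_bound: "\<And>h. \<bar>E' h\<bar> \<le> 72 * pi * \<alpha> * (1 + norm v)\<^sup>2 * norm h"
    using theta_exponent_derivative_bound[OF assms] by blast
  have "((\<lambda>z. (fst z, v)) has_derivative (\<lambda>h. (fst h, 0))) (at (\<tau>, c))"
    by (rule derivative_eq_intros refl)+
  from has_derivative_compose[OF this, of "\<lambda>z. theta_exponent \<alpha> (fst z) (snd z)" E'] E'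
  have D: "((\<lambda>z. theta_exponent \<alpha> (fst z) v) has_derivative (\<lambda>h. E' (fst h, 0))) (at (\<tau>, c))"
    by simp
  have bound: "\<bar>E' (fst h, 0)\<bar> \<le> 72 * pi * \<alpha> * (1 + norm v)\<^sup>2 * norm h" for h :: "complex \<times> 'a"
  proof -
    have "\<bar>E' (fst h, 0)\<bar> \<le> 72 * pi * \<alpha> * (1 + norm v)\<^sup>2 * norm (fst h, 0 :: real \<times> real)"
      by (rule E'_bound)
    also have "\<dots> \<le> 72 * pi * \<alpha> * (1 + norm v)\<^sup>2 * norm h"
      using norm_fst_le[of "fst h" "snd h"] assms(1) by (intro mult_left_mono) auto
    finally show ?thesis .
  qed
  show thesis
    by (rule that[OF D bound])
qed

definition lattice_phase :: "int \<times> int \<Rightarrow> real \<times> real \<Rightarrow> real" where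
  "lattice_phase n c = 2 * pi * (of_int (fst n) * snd c - of_int (snd n) * fst c)"

definition theta_term :: "real \<Rightarrow> int \<times> int \<Rightarrow> complex \<times> (real \<times> real) \<Rightarrow> real" where
  "theta_term \<alpha> n z = exp (theta_exponent \<alpha> (fst z) (lattice_point n + snd z))"

definition theta_hat_term :: "real \<Rightarrow> int \<times> int \<Rightarrow> complex \<times> (real \<times> real) \<Rightarrow> complex" where
  "theta_hat_term \<alpha> n z =
     of_real (exp (theta_exponent \<alpha> (fst z) (lattice_point n))) * cis (lattice_phase n (snd z))"

definition theta_fun :: "real \<Rightarrow> complex \<times> (real \<times> real) \<Rightarrow> real" where
  "theta_fun \<alpha> z = (\<Sum>\<^sub>\<infinity>n. theta_term \<alpha> n z)"

definition theta_hat_fun :: "real \<Rightarrow> complex \<times> (real \<times> real) \<Rightarrow> complex" where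
  "theta_hat_fun \<alpha> z = (\<Sum>\<^sub>\<infinity>n. theta_hat_term \<alpha> n z)"

lemma theta_eq_theta_fun: "theta x y c \<alpha> = theta_fun \<alpha> (Complex x y, c)"
  unfolding theta_def theta_fun_def theta_term_def theta_exponent_def lattice_vec_def lattice_point_def
  by (rule infsum_cong) (simp add: case_prod_beta cmod_power2, simp add: power2_eq_square algebra_simps)

lemma theta_hat_eq_theta_hat_fun: "theta_hat x y c \<alpha> = theta_hat_fun \<alpha> (Complex x y, c)"
  unfolding theta_hat_def theta_hat_fun_def theta_hat_term_def theta_exponent_def lattice_vec_def
    lattice_point_def lattice_phase_def
  by (rule infsum_cong) (simp add: case_prod_beta cmod_power2, simp add: power2_eq_square algebra_simps)

lemma abs_lattice_phase_le: "\<bar>lattice_phase n c\<bar> \<le> 4 * pi * norm (lattice_point n) * norm c"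
proof -
  have "\<bar>lattice_phase n c\<bar> \<le> 2 * pi * (\<bar>of_int (fst n)\<bar> * \<bar>snd c\<bar> + \<bar>of_int (snd n)\<bar> * \<bar>fst c\<bar>)"
    unfolding lattice_phase_def
    using abs_triangle_ineq4[of "of_int (fst n) * snd c" "of_int (snd n) * fst c"]
    by (simp add: abs_mult)
  also have "\<dots> \<le> 2 * pi * ((\<bar>of_int (fst n)\<bar> + \<bar>of_int (snd n)\<bar>) * norm c)"
    using norm_fst_le[of "fst c" "snd c"] norm_snd_le[of "snd c" "fst c"]
    by (simp add: distrib_right add_mono mult_left_mono)
  also have "\<dots> \<le> 2 * pi * (2 * norm (lattice_point n) * norm c)"
    using abs_fst_add_abs_snd_le[of "lattice_point n"]
    by (intro mult_left_mono mult_right_mono) (auto simp: lattice_point_def)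
  finally show ?thesis
    by simp
qed

lemma theta_term_bounds:
  assumes "0 < \<alpha>" "1/2 \<le> Im \<tau>" "cmod \<tau> \<le> 2"
  shows "\<bar>theta_term \<alpha> n (\<tau>, c)\<bar> \<le> gauss_weight (pi * \<alpha> / 98) (lattice_point n + c)"
    and "\<exists>f'. (theta_term \<alpha> n has_derivative f') (at (\<tau>, c)) \<and>
      (\<forall>h. norm (f' h) \<le> 72 * pi * \<alpha> * gauss_weight (pi * \<alpha> / 98) (lattice_point n + c) * norm h)"
proof -
  define v where "v = lattice_point n + c"
  define W where "W = gauss_weight (pi * \<alpha> / 98) v"
  note weight = exp_theta_exponent_le_gauss_weight[OF assms, of v, folded W_def]
  show "\<bar>theta_term \<alpha> n (\<tau>, c)\<bar> \<le> gauss_weight (pi * \<alpha> / 98) (lattice_point n + c)"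
    using weight(2) by (simp add: theta_term_def W_def v_def)
  obtain E' where E': "((\<lambda>z. theta_exponent \<alpha> (fst z) (snd z)) has_derivative E') (at (\<tau>, v))"
    and E'_bound: "\<And>h. \<bar>E' h\<bar> \<le> 72 * pi * \<alpha> * (1 + norm v)\<^sup>2 * norm h"
    using theta_exponent_derivative_bound[OF assms(1-3)] by blast
  have shift: "((\<lambda>z. (fst z, lattice_point n + snd z)) has_derivative (\<lambda>h. h)) (at (\<tau>, c))"
    by (rule has_derivative_eq_rhs, (rule derivative_eq_intros refl)+) simp
  have "((\<lambda>z. theta_exponent \<alpha> (fst z) (snd z)) has_derivative E')
      (at ((\<lambda>z. (fst z, lattice_point n + snd z)) (\<tau>, c)))"
    using E' by (simp add: v_def)
  from has_derivative_compose[OF shift this]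
  have "((\<lambda>z. theta_exponent \<alpha> (fst z) (lattice_point n + snd z)) has_derivative E') (at (\<tau>, c))"
    by simp
  from has_derivative_exp[OF this]
  have "(theta_term \<alpha> n has_derivative (\<lambda>h. E' h * exp (theta_exponent \<alpha> \<tau> v))) (at (\<tau>, c))"
    by (simp add: theta_term_def[abs_def] v_def)
  moreover have "\<bar>E' h * exp (theta_exponent \<alpha> \<tau> v)\<bar> \<le> 72 * pi * \<alpha> * W * norm h" for h
  proof -
    have "\<bar>E' h * exp (theta_exponent \<alpha> \<tau> v)\<bar>
        \<le> 72 * pi * \<alpha> * (1 + norm v)\<^sup>2 * norm h * exp (theta_exponent \<alpha> \<tau> v)"
      using mult_right_mono[OF E'_bound[of h] exp_ge_zero] by (simp add: abs_mult)
    also have "\<dots> = 72 * pi * \<alpha> * ((1 + norm v)\<^sup>2 * exp (theta_exponent \<alpha> \<tau> v)) * norm h"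
      by (simp add: mult_ac)
    also have "\<dots> \<le> 72 * pi * \<alpha> * W * norm h"
      using weight(1) assms(1) by (intro mult_right_mono mult_left_mono) auto
    finally show ?thesis .
  qed
  ultimately show "\<exists>f'. (theta_term \<alpha> n has_derivative f') (at (\<tau>, c)) \<and>
      (\<forall>h. norm (f' h) \<le> 72 * pi * \<alpha> * gauss_weight (pi * \<alpha> / 98) (lattice_point n + c) * norm h)"
    by (auto simp: W_def v_def)
qed

lemma theta_hat_term_bounds:
  assumes "0 < \<alpha>" "1/2 \<le> Im \<tau>" "cmod \<tau> \<le> 2"
  shows "norm (theta_hat_term \<alpha> n (\<tau>, c)) \<le> gauss_weight (pi * \<alpha> / 98) (lattice_point n)"
    and "\<exists>f'. (theta_hat_term \<alpha> n has_derivative f') (at (\<tau>, c)) \<and>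
      (\<forall>h. norm (f' h) \<le> (72 * pi * \<alpha> + 4 * pi) * gauss_weight (pi * \<alpha> / 98) (lattice_point n) * norm h)"
proof -
  define p where "p = lattice_point n"
  define R where "R = (1 + norm p)\<^sup>2"
  note weight = exp_theta_exponent_le_gauss_weight[OF assms, of p, folded R_def]
  show "norm (theta_hat_term \<alpha> n (\<tau>, c)) \<le> gauss_weight (pi * \<alpha> / 98) (lattice_point n)"
    using weight(2) by (simp add: theta_hat_term_def norm_mult p_def)
  obtain E' where gauss: "((\<lambda>z. theta_exponent \<alpha> (fst z) p) has_derivative E') (at (\<tau>, c))"
    and gauss_bound: "\<And>h. \<bar>E' h\<bar> \<le> 72 * pi * \<alpha> * R * norm h"
    using theta_exponent_fixed_vector_derivative_bound[OF assms] unfolding R_def by blast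
  have phase: "((\<lambda>z. lattice_phase n (snd z)) has_derivative (\<lambda>h. lattice_phase n (snd h))) (at (\<tau>, c))"
    unfolding lattice_phase_def by (rule derivative_eq_intros refl)+
  have phase_bound: "\<bar>lattice_phase n (snd h)\<bar> \<le> 4 * pi * R * norm h" for h :: "complex \<times> real \<times> real"
  proof -
    have "\<bar>lattice_phase n (snd h)\<bar> \<le> 4 * pi * norm p * norm (snd h)"
      unfolding p_def by (rule abs_lattice_phase_le)
    also have "\<dots> \<le> 4 * pi * R * norm h"
      using self_le_power[of "1 + norm p" 2] norm_snd_le[of "snd h" "fst h"]
      by (intro mult_mono mult_left_mono) (auto simp: R_def)
    finally show ?thesis .
  qed
  obtain f' where f': "(theta_hat_term \<alpha> n has_derivative f') (at (\<tau>, c))"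
    and f'_bound: "\<And>h. norm (f' h) \<le> (72 * pi * \<alpha> * R + 4 * pi * R) * exp (theta_exponent \<alpha> \<tau> p) * norm h"
    using exp_times_cis_derivative_bound[OF gauss phase gauss_bound phase_bound]
    unfolding theta_hat_term_def[abs_def] p_def[symmetric] fst_conv by blast
  have coefficient: "(72 * pi * \<alpha> * R + 4 * pi * R) * exp (theta_exponent \<alpha> \<tau> p) * norm h
      \<le> (72 * pi * \<alpha> + 4 * pi) * gauss_weight (pi * \<alpha> / 98) p * norm h" for h
  proof -
    have "(72 * pi * \<alpha> * R + 4 * pi * R) * exp (theta_exponent \<alpha> \<tau> p) * norm h
        = (72 * pi * \<alpha> + 4 * pi) * (R * exp (theta_exponent \<alpha> \<tau> p)) * norm h"
      by (simp add: algebra_simps)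
    also have "\<dots> \<le> (72 * pi * \<alpha> + 4 * pi) * gauss_weight (pi * \<alpha> / 98) p * norm h"
      using weight(1) assms(1) by (intro mult_right_mono mult_left_mono) auto
    finally show ?thesis .
  qed
  show "\<exists>f'. (theta_hat_term \<alpha> n has_derivative f') (at (\<tau>, c)) \<and>
      (\<forall>h. norm (f' h) \<le> (72 * pi * \<alpha> + 4 * pi) * gauss_weight (pi * \<alpha> / 98) (lattice_point n) * norm h)"
    using f' order_trans[OF f'_bound coefficient] unfolding p_def by blast
qed

section \<open>Differentiability at the fixed point\<close>

definition rho :: complex where
  "rho = Complex (1/2) (sqrt 3 / 2)"

definition rho_point :: "complex \<times> (real \<times> real)" where
  "rho_point = (rho, (1/3, 1/3))"

lemma near_rho_point:
  assumes "z \<in> ball rho_point (1/10)"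
  shows "1/2 \<le> Im (fst z)" "cmod (fst z) \<le> 2" "norm (snd z) \<le> 1"
proof -
  have "dist (fst z) rho < 1/10" "dist (snd z) (1/3, 1/3) < 1/10"
    using assms dist_fst_le[of z rho_point] dist_snd_le[of z rho_point]
    by (auto simp: rho_point_def dist_commute)
  then have close: "cmod (fst z - rho) < 1/10" "norm (snd z - (1/3, 1/3)) < 1/10"
    by (simp_all add: dist_norm)
  have "(6/5)\<^sup>2 \<le> (sqrt 3)\<^sup>2"
    by (simp add: power2_eq_square)
  then have "6/5 \<le> sqrt 3"
    by (rule power2_le_imp_le) simp
  moreover have "\<bar>Im (fst z) - sqrt 3 / 2\<bar> < 1/10"
    using abs_Im_le_cmod[of "fst z - rho"] close(1) by (simp add: rho_def)
  ultimately show "1/2 \<le> Im (fst z)"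
    unfolding abs_less_iff by linarith
  have "cmod rho = 1"
    by (simp add: rho_def cmod_def power_divide)
  then show "cmod (fst z) \<le> 2"
    using norm_triangle_ineq2[of "fst z" rho] close(1) by linarith
  have "norm ((1/3, 1/3) :: real \<times> real) \<le> 2/3"
    using norm_Pair_le[of "1/3 :: real" "1/3 :: real"] by simp
  then show "norm (snd z) \<le> 1"
    using norm_triangle_ineq2[of "snd z" "(1/3, 1/3)"] close(2) by linarith
qed

lemma theta_terms_dominated:
  assumes "0 < \<alpha>" "z \<in> ball rho_point (1/10)"
    and B: "\<And>c. norm c \<le> 1 \<Longrightarrow> (72 * pi * \<alpha> + 4 * pi) * gauss_weight (pi * \<alpha> / 98) (lattice_point n + c) \<le> B n"
  shows "norm (theta_term \<alpha> n z) \<le> B n"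
    and "\<exists>f'. (theta_term \<alpha> n has_derivative f') (at z) \<and> (\<forall>h. norm (f' h) \<le> B n * norm h)"
    and "norm (theta_hat_term \<alpha> n z) \<le> B n"
    and "\<exists>f'. (theta_hat_term \<alpha> n has_derivative f') (at z) \<and> (\<forall>h. norm (f' h) \<le> B n * norm h)"
proof -
  obtain \<tau> c where z: "z = (\<tau>, c)"
    by (cases z)
  have near: "1/2 \<le> Im \<tau>" "cmod \<tau> \<le> 2" "norm c \<le> 1"
    using near_rho_point[OF assms(2)] by (simp_all add: z)
  define C where "C = 72 * pi * \<alpha> + 4 * pi"
  have C: "1 \<le> C" "72 * pi * \<alpha> \<le> C"
    unfolding C_def using pi_gt3 mult_pos_pos[OF pi_gt_zero assms(1)] by linarith+
  have le_B: "W \<le> B n" "72 * pi * \<alpha> * W \<le> B n" "C * W \<le> B n" if "C * W \<le> B n" "0 \<le> W" for W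
    using that mult_right_mono[OF C(1) that(2)] mult_right_mono[OF C(2) that(2)] by simp_all
  note W = le_B[OF B[OF near(3), folded C_def] gauss_weight_nonneg]
    le_B[OF B[of 0, simplified, folded C_def] gauss_weight_nonneg]
  show "norm (theta_term \<alpha> n z) \<le> B n"
    using order_trans[OF theta_term_bounds(1)[OF assms(1) near(1,2)] W(1)] by (simp add: z)
  show "norm (theta_hat_term \<alpha> n z) \<le> B n"
    using order_trans[OF theta_hat_term_bounds(1)[OF assms(1) near(1,2)] W(4)] by (simp add: z)
  obtain f' where f': "(theta_term \<alpha> n has_derivative f') (at z)"
    "\<And>h. norm (f' h) \<le> 72 * pi * \<alpha> * gauss_weight (pi * \<alpha> / 98) (lattice_point n + c) * norm h"
    using theta_term_bounds(2)[OF assms(1) near(1,2)] unfolding z by blast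
  then show "\<exists>f'. (theta_term \<alpha> n has_derivative f') (at z) \<and> (\<forall>h. norm (f' h) \<le> B n * norm h)"
    using order_trans[OF f'(2) mult_right_mono[OF W(2) norm_ge_zero]] by blast
  obtain g' where g': "(theta_hat_term \<alpha> n has_derivative g') (at z)"
    "\<And>h. norm (g' h) \<le> C * gauss_weight (pi * \<alpha> / 98) (lattice_point n) * norm h"
    using theta_hat_term_bounds(2)[OF assms(1) near(1,2), folded C_def] unfolding z by blast
  then show "\<exists>f'. (theta_hat_term \<alpha> n has_derivative f') (at z) \<and> (\<forall>h. norm (f' h) \<le> B n * norm h)"
    using order_trans[OF g'(2) mult_right_mono[OF W(6) norm_ge_zero]] by blast
qed

lemma theta_differentiable_at_rho_point:
  assumes "0 < \<alpha>"
  shows "theta_fun \<alpha> differentiable (at rho_point)"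
    and "theta_hat_fun \<alpha> differentiable (at rho_point)"
proof -
  obtain B0 where B0: "B0 summable_on UNIV"
    and B0_bound: "\<And>n c. norm c \<le> 1 \<Longrightarrow> gauss_weight (pi * \<alpha> / 98) (lattice_point n + c) \<le> B0 n"
    using lattice_gaussian_majorant[of "pi * \<alpha> / 98"] assms by auto
  define B where "B n = (72 * pi * \<alpha> + 4 * pi) * B0 n" for n
  have B: "B summable_on UNIV"
    unfolding B_def[abs_def] using B0 by (rule summable_on_cmult_right)
  have "(72 * pi * \<alpha> + 4 * pi) * gauss_weight (pi * \<alpha> / 98) (lattice_point n + c) \<le> B n"
    if "norm c \<le> 1" for n c
    unfolding B_def using B0_bound[OF that] assms by (intro mult_left_mono) auto
  note dominated = theta_terms_dominated[OF assms _ this]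
  have S: "open (ball rho_point (1/10))" "convex (ball rho_point (1/10))"
    "rho_point \<in> ball rho_point (1/10)"
    by auto
  show "theta_fun \<alpha> differentiable (at rho_point)"
    unfolding theta_fun_def[abs_def]
    by (rule differentiable_infsum_dominated[OF S B]) (rule dominated(2,1); assumption)+
  show "theta_hat_fun \<alpha> differentiable (at rho_point)"
    unfolding theta_hat_fun_def[abs_def]
    by (rule differentiable_infsum_dominated[OF S B]) (rule dominated(4,3); assumption)+
qed

section \<open>The order-three symmetry\<close>

text \<open>\<open>\<tau> \<mapsto> 1 / (1 - \<tau>)\<close> is the element of order three of \<open>SL\<^sub>2(\<int>)\<close> fixing \<open>\<rho>\<close>. For
  \<open>\<tau>' = 1 / (1 - \<tau>)\<close> the lattice \<open>\<int> + \<tau>' \<int>\<close> is \<open>(\<int> + \<tau> \<int>) / (1 - \<tau>)\<close>, so the theta series at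
  \<open>\<tau>'\<close> is a rearrangement of the one at \<open>\<tau>\<close>, with the shift \<open>c\<close> transformed accordingly.\<close>

definition rho_rotation :: "complex \<times> (real \<times> real) \<Rightarrow> complex \<times> (real \<times> real)" where
  "rho_rotation z = (1 / (1 - fst z), (snd (snd z), 1 - fst (snd z) - snd (snd z)))"

lemma theta_exponent_moebius:
  assumes "0 < Im \<tau>"
  shows "theta_exponent \<alpha> (1 / (1 - \<tau>)) (u, w) = theta_exponent \<alpha> \<tau> (- u - w, u)"
proof -
  have "1 - \<tau> \<noteq> 0"
    using assms by auto
  have vec: "lattice_vec (1 / (1 - \<tau>)) (u, w) = - lattice_vec \<tau> (- u - w, u) / (1 - \<tau>)"
    using \<open>1 - \<tau> \<noteq> 0\<close> by (simp add: lattice_vec_def field_simps)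
  have im: "Im (1 / (1 - \<tau>)) = Im \<tau> / (cmod (1 - \<tau>))\<^sup>2"
    by (simp add: Im_divide cmod_power2)
  show ?thesis
    unfolding theta_exponent_def vec im using \<open>1 - \<tau> \<noteq> 0\<close> assms
    by (simp add: norm_divide power_divide)
qed

lemma theta_term_rho_rotation:
  assumes "0 < Im (fst z)"
  shows "theta_term \<alpha> n (rho_rotation z) = theta_term \<alpha> (- fst n - snd n - 1, fst n) z"
proof -
  have "lattice_point (- fst n - snd n - 1, fst n) + snd z
      = (- (of_int (fst n) + snd (snd z)) - (of_int (snd n) + (1 - fst (snd z) - snd (snd z))),
         of_int (fst n) + snd (snd z))"
    by (simp add: lattice_point_def prod_eq_iff algebra_simps)
  then show ?thesis
    using assms by (simp add: theta_term_def rho_rotation_def lattice_point_def theta_exponent_moebius)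
qed

lemma theta_hat_term_rho_rotation:
  assumes "0 < Im (fst z)"
  shows "theta_hat_term \<alpha> n (rho_rotation z) = theta_hat_term \<alpha> (- fst n - snd n, fst n) z"
proof -
  have "lattice_point (- fst n - snd n, fst n) = (- of_int (fst n) - of_int (snd n), of_int (fst n))"
    by (simp add: lattice_point_def)
  moreover have "cis (lattice_phase n (snd (rho_rotation z)))
      = cis (lattice_phase (- fst n - snd n, fst n) (snd z)) * cis (2 * pi * of_int (fst n))"
    by (simp add: lattice_phase_def rho_rotation_def cis_mult algebra_simps)
  ultimately show ?thesis
    using assms by (simp add: theta_hat_term_def lattice_point_def theta_exponent_moebius rho_rotation_def)
qed

lemma theta_fun_rho_rotation:
  assumes "0 < Im (fst z)"
  shows "theta_fun \<alpha> (rho_rotation z) = theta_fun \<alpha> z"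
    and "theta_hat_fun \<alpha> (rho_rotation z) = theta_hat_fun \<alpha> z"
proof -
  have "bij (\<lambda>n::int \<times> int. (- fst n - snd n - 1, fst n))"
    by (rule o_bij[where g = "\<lambda>n. (snd n, - fst n - snd n - 1)"]) (auto simp: fun_eq_iff)
  then show "theta_fun \<alpha> (rho_rotation z) = theta_fun \<alpha> z"
    unfolding theta_fun_def theta_term_rho_rotation[OF assms] by (rule infsum_reindex_bij_betw)
  have "bij (\<lambda>n::int \<times> int. (- fst n - snd n, fst n))"
    by (rule o_bij[where g = "\<lambda>n. (snd n, - fst n - snd n)"]) (auto simp: fun_eq_iff)
  then show "theta_hat_fun \<alpha> (rho_rotation z) = theta_hat_fun \<alpha> z"
    unfolding theta_hat_fun_def theta_hat_term_rho_rotation[OF assms] by (rule infsum_reindex_bij_betw)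
qed

lemma one_minus_rho_inverse: "1 / (1 - rho) = rho"
  by (simp add: rho_def complex_eq_iff Re_divide Im_divide power2_eq_square)

lemma rho_powers_sum: "1 + rho\<^sup>2 + rho ^ 4 = 0"
  by (simp add: rho_def complex_eq_iff numeral_eq_Suc power2_eq_square algebra_simps)

lemma rho_rotation_rho_point: "rho_rotation rho_point = rho_point"
  by (simp add: rho_rotation_def rho_point_def one_minus_rho_inverse)

definition rho_rotation_linear :: "complex \<times> (real \<times> real) \<Rightarrow> complex \<times> (real \<times> real)" where
  "rho_rotation_linear h = (rho\<^sup>2 * fst h, (snd (snd h), - fst (snd h) - snd (snd h)))"

lemma rho_rotation_has_derivative: "(rho_rotation has_derivative rho_rotation_linear) (at rho_point)"
proof -
  have "rho \<noteq> 1" "inverse (1 - rho) = rho"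
    using one_minus_rho_inverse by (auto simp: inverse_eq_divide)
  show ?thesis
    unfolding rho_rotation_def[abs_def] rho_point_def
    apply (rule has_derivative_eq_rhs)
     apply (rule derivative_eq_intros refl | simp add: \<open>rho \<noteq> 1\<close>)+
    apply (simp add: rho_rotation_linear_def[abs_def] \<open>inverse (1 - rho) = rho\<close> power2_eq_square mult_ac)
    done
qed

lemma rho_rotation_linear_order3: "h + rho_rotation_linear h + rho_rotation_linear (rho_rotation_linear h) = 0"
proof -
  have "fst h + rho\<^sup>2 * fst h + rho\<^sup>2 * (rho\<^sup>2 * fst h) = (1 + rho\<^sup>2 + rho ^ 4) * fst h"
    by (simp add: algebra_simps power2_eq_square power4_eq_xxxx)
  then show ?thesis
    using rho_powers_sum by (simp add: rho_rotation_linear_def prod_eq_iff)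
qed

lemma theta_has_derivative_zero_at_rho_point:
  assumes "0 < \<alpha>"
  shows "(theta_fun \<alpha> has_derivative (\<lambda>_. 0)) (at rho_point)"
    and "(theta_hat_fun \<alpha> has_derivative (\<lambda>_. 0)) (at rho_point)"
proof -
  have "\<forall>\<^sub>F z in at rho_point. z \<in> ball rho_point (1/10)"
    by (rule eventually_at_in_open') auto
  then have upper_half: "\<forall>\<^sub>F z in at rho_point. 0 < Im (fst z)"
    by eventually_elim (use near_rho_point(1) in fastforce)
  obtain D where "(theta_fun \<alpha> has_derivative D) (at rho_point)"
    using theta_differentiable_at_rho_point(1)[OF assms] unfolding differentiable_def by blast
  moreover have "D = (\<lambda>_. 0)"
    by (rule has_derivative_zero_of_invariant[OF calculation rho_rotation_has_derivative
          rho_rotation_rho_point _ rho_rotation_linear_order3])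
       (use upper_half in \<open>auto elim: eventually_mono simp: theta_fun_rho_rotation\<close>)
  ultimately show "(theta_fun \<alpha> has_derivative (\<lambda>_. 0)) (at rho_point)"
    by simp
  obtain D' where "(theta_hat_fun \<alpha> has_derivative D') (at rho_point)"
    using theta_differentiable_at_rho_point(2)[OF assms] unfolding differentiable_def by blast
  moreover have "D' = (\<lambda>_. 0)"
    by (rule has_derivative_zero_of_invariant[OF calculation rho_rotation_has_derivative
          rho_rotation_rho_point _ rho_rotation_linear_order3])
       (use upper_half in \<open>auto elim: eventually_mono simp: theta_fun_rho_rotation\<close>)
  ultimately show "(theta_hat_fun \<alpha> has_derivative (\<lambda>_. 0)) (at rho_point)"
    by simp
qed

theorem lemma4p1:
  fixes \<alpha> :: real
  assumes "\<alpha> > 0"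
  shows "((\<lambda>p. theta (fst p) (snd p) (bpt (fst p) (snd p)) \<alpha>) has_derivative (\<lambda>_. 0))
           (at (1/2, sqrt 3 / 2)) \<and>
         ((\<lambda>p. theta_hat (fst p) (snd p) (bpt (fst p) (snd p)) \<alpha>) has_derivative (\<lambda>_. 0))
           (at (1/2, sqrt 3 / 2))"
proof -
  define emb where "emb p = (Complex (fst p) (snd p), bpt (fst p) (snd p))" for p :: "real \<times> real"
  have emb_fixed: "emb (1/2, sqrt 3 / 2) = rho_point"
    by (simp add: emb_def rho_point_def rho_def bpt_def power_divide)
  have "\<exists>E. (emb has_derivative E) (at (1/2, sqrt 3 / 2))"
    unfolding emb_def[abs_def] bpt_def Complex_eq
    by (intro exI) (rule derivative_eq_intros refl | simp)+
  then obtain E where E: "(emb has_derivative E) (at (1/2, sqrt 3 / 2))"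
    by blast
  note zero = theta_has_derivative_zero_at_rho_point[OF assms, folded emb_fixed]
  show ?thesis
    using has_derivative_compose[OF E zero(1)] has_derivative_compose[OF E zero(2)]
    by (simp add: emb_def theta_eq_theta_fun theta_hat_eq_theta_hat_fun)
qed

end
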